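(* Let $r=\frac{1}{2\pi}$ and let $F$ be the regular $500$-gon with vertices $\bigl(r\cos\frac{k\pi}{250}, r\sin\frac{k\pi}{250}\bigr)$, $k=0,\dots,499$. For $z=(x_1,y_1,x_2,y_2,\theta)\in\mathbb{R}^5$ let $R(z)$ be the closed rectangle with sides parallel to the coordinate axes, center $(x_1,y_1)$, horizontal side length $0.4625$ and vertical side length $0.0375$, and let $T(z)$ be the closed equilateral triangle with vertices $\bigl(x_2+\frac{\sqrt3}{9}\cos(\theta+\frac{2\pi j}{3}),\, y_2+\frac{\sqrt3}{9}\sin(\theta+\frac{2\pi j}{3})\bigr)$, $j=0,1,2$. Let $f(z)$ be the area of the convex hull of $F\cup R(z)\cup T(z)$. Then for every $z\in\mathbb{R}^5$, either $f(z)>0.0975$, or $F\cup T(z)\cup R(z)$ is contained in a rectangle with side lengths $0.386\times 0.644$. *)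

theory Defs
  imports "HOL-Analysis.Analysis"
begin

definition rpoly :: real where "rpoly = 1 / (2 * pi)"

definition polyF :: "(real \<times> real) set" where
  "polyF = convex hull {(rpoly * cos (real k * pi / 250), rpoly * sin (real k * pi / 250)) | k. k < (500::nat)}"

definition rectR :: "real \<Rightarrow> real \<Rightarrow> (real \<times> real) set" where
  "rectR x1 y1 = {(x, y). \<bar>x - x1\<bar> \<le> 0.4625 / 2 \<and> \<bar>y - y1\<bar> \<le> 0.0375 / 2}"

definition triT :: "real \<Rightarrow> real \<Rightarrow> real \<Rightarrow> (real \<times> real) set" where
  "triT x2 y2 \<theta> = convex hull {(x2 + sqrt 3 / 9 * cos (\<theta> + 2 * pi * real j / 3),
                                 y2 + sqrt 3 / 9 * sin (\<theta> + 2 * pi * real j / 3)) | j. j < (3::nat)}"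

definition rect_sides :: "real \<Rightarrow> real \<Rightarrow> (real \<times> real) set \<Rightarrow> bool" where
  "rect_sides a b S \<longleftrightarrow> (\<exists>c1 c2 \<phi>. S =
     {(c1 + s * cos \<phi> - t * sin \<phi>, c2 + s * sin \<phi> + t * cos \<phi>) | s t.
        0 \<le> s \<and> s \<le> a \<and> 0 \<le> t \<and> t \<le> b})"

definition fval :: "real \<Rightarrow> real \<Rightarrow> real \<Rightarrow> real \<Rightarrow> real \<Rightarrow> real" where
  "fval x1 y1 x2 y2 \<theta> = measure lebesgue (convex hull (polyF \<union> rectR x1 y1 \<union> triT x2 y2 \<theta>))"

end

theory Submission
  imports Defs
begin

(* Let U be the union of F, R and T and K its convex hull. If U is taller than 0.386, then K
   contains points at heights a and c with c - a > 0.386 (after enlarging [a, c], the band of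
   heights covered by the rectangle lies inside it), and the rectangle gives horizontal segments
   of length w = 0.4625 at every height of that band of height 0.0375. By convexity each
   horizontal slice of K is at least as long as the corresponding slice of the trapezoid spanned
   by these points and the band, so by Cavalieri's principle
   area K \<ge> w (c - a) / 2 + w * 0.0375 / 2 > 0.0975. If U is wider than 0.644, the same argument
   with vertical slices and the vertical diameter of F (length 2r) gives area K \<ge> r * 0.644 > 0.0975.
   Otherwise U fits into an axis-parallel box of size 0.644 \<times> 0.386. *)

lemma emeasure_lebesgue_ge_nn_integral_slices:
  fixes K :: "(real \<times> real) set"
  assumes "closed K" and "AE y in lborel. g y \<le> emeasure lborel {x. (x, y) \<in> K}"
  shows "(\<integral>\<^sup>+y. g y \<partial>lborel) \<le> emeasure lebesgue K"
proof -
  have K: "K \<in> sets borel" using assms(1) by (simp add: borel_closed)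
  have "(\<integral>\<^sup>+y. g y \<partial>lborel) \<le> (\<integral>\<^sup>+y. emeasure lborel ((\<lambda>x. (x, y)) -` K) \<partial>lborel)"
    using assms(2) by (intro nn_integral_mono_AE) (simp add: vimage_def)
  also have "\<dots> = emeasure (lborel \<Otimes>\<^sub>M lborel) K"
    by (rule lborel_pair.emeasure_pair_measure_alt2[symmetric]) (unfold lborel_prod, use K in simp)
  also have "\<dots> = emeasure lebesgue K"
    using K by (simp add: lborel_prod)
  finally show ?thesis .
qed

lemma emeasure_lebesgue_swap:
  fixes K :: "(real \<times> real) set"
  assumes "K \<in> sets borel"
  shows "emeasure lebesgue (prod.swap ` K) = emeasure lebesgue K"
proof -
  let ?M = "lborel \<Otimes>\<^sub>M lborel :: (real \<times> real) measure"
  have eq: "prod.swap ` K = (\<lambda>(x, y). (y, x)) -` K \<inter> space ?M"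
    by (force simp: image_iff space_pair_measure)
  have swap: "prod.swap ` K \<in> sets borel"
    using sets_pair_swap[of K lborel lborel] assms unfolding lborel_prod eq by simp
  have "emeasure lebesgue K = emeasure (distr ?M ?M (\<lambda>(x, y). (y, x))) K"
    using assms by (simp only: lborel_pair.distr_pair_swap[symmetric]) (simp add: lborel_prod)
  also have "\<dots> = emeasure ?M (prod.swap ` K)"
    unfolding eq by (rule emeasure_distr[OF measurable_pair_swap']) (unfold lborel_prod, use assms in simp)
  also have "\<dots> = emeasure lebesgue (prod.swap ` K)"
    using swap by (simp add: lborel_prod)
  finally show ?thesis ..
qed

lemma emeasure_slice_ge_segment:
  fixes K :: "(real \<times> real) set"
  assumes "closed K" "convex K" "(u, y) \<in> K" "(u + d, y) \<in> K" "0 \<le> d"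
  shows "ennreal d \<le> emeasure lborel {x. (x, y) \<in> K}"
proof -
  have "{u..u + d} \<subseteq> {x. (x, y) \<in> K}"
  proof
    fix x assume x: "x \<in> {u..u + d}"
    have "(x, y) \<in> closed_segment (u, y) (u + d, y)"
      using x by (auto simp: closed_segment_eq_real_ivl closed_segment_same_snd)
    then show "x \<in> {x. (x, y) \<in> K}"
      using convex_contains_segment assms(2-4) by blast
  qed
  moreover have "{x. (x, y) \<in> K} \<in> sets lborel"
    using continuous_closed_vimage[OF assms(1), of "\<lambda>x. (x, y)"] by (simp add: vimage_def borel_closed)
  ultimately have "emeasure lborel {u..u + d} \<le> emeasure lborel {x. (x, y) \<in> K}"
    by (rule emeasure_mono)
  then show ?thesis using assms(5) by simp
qed

lemma emeasure_slice_ge_cone: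
  fixes K :: "(real \<times> real) set"
  assumes K: "closed K" "convex K"
    and apex: "(p, a) \<in> K" and base: "(u, b) \<in> K" "(u + w, b) \<in> K" "0 \<le> w"
    and y: "min a b \<le> y" "y \<le> max a b"
  shows "ennreal (w * ((y - a) / (b - a))) \<le> emeasure lborel {x. (x, y) \<in> K}"
proof (cases "a = b")
  case False
  define t where "t = (y - a) / (b - a)"
  have t: "0 \<le> t" "t \<le> 1"
    using y False by (auto simp: t_def min_def max_def divide_simps split: if_splits)
  have "(1 - t) * a + t * b = a + t * (b - a)"
    by (simp add: algebra_simps)
  then have "(1 - t) * a + t * b = y"
    using False by (simp add: t_def)
  then have "((1 - t) * p + t * u, y) \<in> K" "((1 - t) * p + t * u + t * w, y) \<in> K"
    using convexD[OF K(2) apex base(1), of "1 - t" t] convexD[OF K(2) apex base(2), of "1 - t" t] t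
    by (simp_all add: algebra_simps)
  then have "ennreal (t * w) \<le> emeasure lborel {x. (x, y) \<in> K}"
    by (rule emeasure_slice_ge_segment[OF K]) (use t base(3) in simp)
  then show ?thesis
    by (simp add: t_def mult.commute)
qed simp

lemma ramp_has_integral:
  fixes a b :: real
  shows "((\<lambda>y. (y - a) / (b - a)) has_integral \<bar>b - a\<bar> / 2) {min a b..max a b}"
proof (cases "a = b")
  case False
  then have ba: "b - a \<noteq> 0" by simp
  let ?F = "\<lambda>y. (y - a)\<^sup>2 / 2 / (b - a)"
  have "((\<lambda>y. (y - a) / (b - a)) has_integral ?F (max a b) - ?F (min a b)) {min a b..max a b}"
  proof (rule fundamental_theorem_of_calculus)
    fix y
    show "(?F has_vector_derivative (y - a) / (b - a)) (at y within {min a b..max a b})"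
      unfolding has_real_derivative_iff_has_vector_derivative[symmetric]
      using ba by (auto intro!: derivative_eq_intros) (simp add: frac_eq_eq algebra_simps)
  qed simp
  also have "?F (max a b) - ?F (min a b) = \<bar>b - a\<bar> / 2"
  proof -
    have "?F b = (b - a) / 2"
      using ba by (simp add: power2_eq_square field_simps)
    then show ?thesis by (simp add: max_def min_def)
  qed
  finally show ?thesis .
qed simp

lemma nn_integral_ramp:
  fixes a b w :: real
  assumes "0 \<le> w"
  shows "(\<integral>\<^sup>+y. ennreal (w * ((y - a) / (b - a))) * indicator {min a b..max a b} y \<partial>lborel)
    = ennreal (w * \<bar>b - a\<bar> / 2)"
proof (rule nn_integral_has_integral_lebesgue')
  show "0 \<le> w * ((y - a) / (b - a))" if "y \<in> {min a b..max a b}" for y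
    using that assms by (intro mult_nonneg_nonneg) (auto simp: min_def max_def divide_simps split: if_splits)
  show "((\<lambda>y. w * ((y - a) / (b - a))) has_integral w * \<bar>b - a\<bar> / 2) {min a b..max a b}"
    using has_integral_mult_right[OF ramp_has_integral, of w] by simp
qed

(* Slice length of the trapezoid with bottom vertex at height a, top vertex at height c and a
   band of width w between heights b0 and b1. *)
definition trapezoid_profile :: "real \<Rightarrow> real \<Rightarrow> real \<Rightarrow> real \<Rightarrow> real \<Rightarrow> real \<Rightarrow> ennreal" where
  "trapezoid_profile a b0 b1 c w y =
     ennreal (w * ((y - a) / (b0 - a))) * indicator {a..b0} y
     + ennreal w * indicator {b0..b1} y
     + ennreal (w * ((y - c) / (b1 - c))) * indicator {b1..c} y"

lemma nn_integral_trapezoid_profile: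
  assumes "a \<le> b0" "b0 \<le> b1" "b1 \<le> c" "0 \<le> w"
  shows "(\<integral>\<^sup>+y. trapezoid_profile a b0 b1 c w y \<partial>lborel) = ennreal (w * (c - a) / 2 + w * (b1 - b0) / 2)"
proof -
  have rise: "(\<integral>\<^sup>+y. ennreal (w * ((y - a) / (b0 - a))) * indicator {a..b0} y \<partial>lborel) = ennreal (w * (b0 - a) / 2)"
    using nn_integral_ramp[OF assms(4), of a b0] assms(1) by (simp add: min_def max_def)
  have top: "(\<integral>\<^sup>+y. ennreal w * indicator {b0..b1} y \<partial>lborel) = ennreal (w * (b1 - b0))"
    using assms by (simp add: nn_integral_cmult_indicator ennreal_mult)
  have fall: "(\<integral>\<^sup>+y. ennreal (w * ((y - c) / (b1 - c))) * indicator {b1..c} y \<partial>lborel) = ennreal (w * (c - b1) / 2)"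
    using nn_integral_ramp[OF assms(4), of c b1] assms(3) by (simp add: min.absorb2 max.absorb1)
  have "(\<integral>\<^sup>+y. trapezoid_profile a b0 b1 c w y \<partial>lborel)
      = (\<integral>\<^sup>+y. ennreal (w * ((y - a) / (b0 - a))) * indicator {a..b0} y \<partial>lborel)
        + (\<integral>\<^sup>+y. ennreal w * indicator {b0..b1} y \<partial>lborel)
        + (\<integral>\<^sup>+y. ennreal (w * ((y - c) / (b1 - c))) * indicator {b1..c} y \<partial>lborel)"
    unfolding trapezoid_profile_def by (simp add: nn_integral_add)
  also have "\<dots> = ennreal (w * (b0 - a) / 2) + ennreal (w * (b1 - b0)) + ennreal (w * (c - b1) / 2)"
    by (simp only: rise top fall)
  also have "\<dots> = ennreal (w * (b0 - a) / 2 + w * (b1 - b0) + w * (c - b1) / 2)"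
    using assms by (simp add: ennreal_plus[symmetric] del: ennreal_plus)
  also have "w * (b0 - a) / 2 + w * (b1 - b0) + w * (c - b1) / 2 = w * (c - a) / 2 + w * (b1 - b0) / 2"
    by (simp add: field_simps)
  finally show ?thesis .
qed

lemma measure_ge_trapezoid:
  fixes K :: "(real \<times> real) set"
  assumes K: "compact K" "convex K"
    and ord: "a \<le> b0" "b0 \<le> b1" "b1 \<le> c" "0 \<le> w"
    and bottom: "(p, a) \<in> K" and top: "(q, c) \<in> K"
    and band: "\<And>y. y \<in> {b0..b1} \<Longrightarrow> \<exists>u. (u, y) \<in> K \<and> (u + w, y) \<in> K"
  shows "w * (c - a) / 2 + w * (b1 - b0) / 2 \<le> measure lebesgue K"
proof -
  have closed: "closed K" using K(1) by (rule compact_imp_closed)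
  have slice: "trapezoid_profile a b0 b1 c w y \<le> emeasure lborel {x. (x, y) \<in> K}"
    if y: "y \<noteq> b0" "y \<noteq> b1" for y
  proof -
    consider (rise) "a \<le> y" "y < b0" | (flat) "b0 < y" "y < b1" | (fall) "b1 < y" "y \<le> c"
      | (outside) "y < a \<or> c < y"
      using y by linarith
    then show ?thesis
    proof cases
      case rise
      obtain u where "(u, b0) \<in> K" "(u + w, b0) \<in> K" using band[of b0] ord by auto
      then have "ennreal (w * ((y - a) / (b0 - a))) \<le> emeasure lborel {x. (x, y) \<in> K}"
        using emeasure_slice_ge_cone[OF closed K(2) bottom _ _ ord(4)] rise by simp
      then show ?thesis using rise ord by (simp add: trapezoid_profile_def)
    next
      case flat
      obtain u where "(u, y) \<in> K" "(u + w, y) \<in> K" using band[of y] flat by auto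
      then have "ennreal w \<le> emeasure lborel {x. (x, y) \<in> K}"
        using emeasure_slice_ge_segment[OF closed K(2) _ _ ord(4)] by simp
      then show ?thesis using flat ord by (simp add: trapezoid_profile_def)
    next
      case fall
      obtain u where "(u, b1) \<in> K" "(u + w, b1) \<in> K" using band[of b1] ord by auto
      then have "ennreal (w * ((y - c) / (b1 - c))) \<le> emeasure lborel {x. (x, y) \<in> K}"
        using emeasure_slice_ge_cone[OF closed K(2) top _ _ ord(4)] fall by simp
      then show ?thesis using fall ord by (simp add: trapezoid_profile_def)
    next
      case outside
      then show ?thesis using ord by (auto simp: trapezoid_profile_def)
    qed
  qed
  have "AE y in lborel. trapezoid_profile a b0 b1 c w y \<le> emeasure lborel {x. (x, y) \<in> K}"
    using AE_lborel_singleton[of b0] AE_lborel_singleton[of b1]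
    by eventually_elim (use slice in auto)
  from emeasure_lebesgue_ge_nn_integral_slices[OF closed this]
  have "ennreal (w * (c - a) / 2 + w * (b1 - b0) / 2) \<le> emeasure lebesgue K"
    by (simp add: nn_integral_trapezoid_profile[OF ord])
  also have "\<dots> = ennreal (measure lebesgue K)"
    using lmeasurable_compact[OF K(1)] by (rule emeasure_eq_measure2)
  finally show ?thesis by (simp add: ennreal_le_iff)
qed

lemma measure_ge_trapezoid_vertical:
  fixes K :: "(real \<times> real) set"
  assumes K: "compact K" "convex K"
    and ord: "a \<le> b0" "b0 \<le> b1" "b1 \<le> c" "0 \<le> w"
    and left: "(a, p) \<in> K" and right: "(c, q) \<in> K"
    and band: "\<And>x. x \<in> {b0..b1} \<Longrightarrow> \<exists>u. (x, u) \<in> K \<and> (x, u + w) \<in> K"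
  shows "w * (c - a) / 2 + w * (b1 - b0) / 2 \<le> measure lebesgue K"
proof -
  have "linear (prod.swap :: real \<times> real \<Rightarrow> real \<times> real)"
    by (auto intro!: linearI)
  then have "compact (prod.swap ` K)" "convex (prod.swap ` K)"
    using K by (auto intro: compact_continuous_image continuous_on_swap convex_linear_image)
  then have "w * (c - a) / 2 + w * (b1 - b0) / 2 \<le> measure lebesgue (prod.swap ` K)"
    by (rule measure_ge_trapezoid[OF _ _ ord]) (use left right band in \<open>force+\<close>)
  also have "\<dots> = measure lebesgue K"
    using K(1) by (simp add: measure_def emeasure_lebesgue_swap borel_compact)
  finally show ?thesis .
qed

lemma rect_sides_box: "rect_sides a b ({c1 - b..c1} \<times> {c2..c2 + a})"
  unfolding rect_sides_def
proof (intro exI)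
  show "{c1 - b..c1} \<times> {c2..c2 + a} =
      {(c1 + s * cos (pi / 2) - t * sin (pi / 2), c2 + s * sin (pi / 2) + t * cos (pi / 2)) | s t.
        0 \<le> s \<and> s \<le> a \<and> 0 \<le> t \<and> t \<le> b}"
  proof (rule set_eqI, rule iffI)
    fix z :: "real \<times> real"
    assume "z \<in> {c1 - b..c1} \<times> {c2..c2 + a}"
    then show "z \<in> {(c1 + s * cos (pi / 2) - t * sin (pi / 2),
        c2 + s * sin (pi / 2) + t * cos (pi / 2)) | s t. 0 \<le> s \<and> s \<le> a \<and> 0 \<le> t \<and> t \<le> b}"
      by (cases z) (simp, rule exI[of _ "snd z - c2"], rule exI[of _ "c1 - fst z"], auto)
  qed auto
qed

lemma rect_sides_cover:
  fixes U :: "(real \<times> real) set"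
  assumes "compact U" "U \<noteq> {}"
    and "\<And>u v. u \<in> U \<Longrightarrow> v \<in> U \<Longrightarrow> snd v - snd u \<le> a \<and> fst v - fst u \<le> b"
  shows "\<exists>Q. rect_sides a b Q \<and> U \<subseteq> Q"
proof -
  obtain lo where lo: "lo \<in> U" "\<And>u. u \<in> U \<Longrightarrow> snd lo \<le> snd u"
    using continuous_attains_inf[OF assms(1,2) continuous_on_snd[OF continuous_on_id]] by blast
  obtain hi where hi: "hi \<in> U" "\<And>u. u \<in> U \<Longrightarrow> fst u \<le> fst hi"
    using continuous_attains_sup[OF assms(1,2) continuous_on_fst[OF continuous_on_id]] by blast
  have "U \<subseteq> {fst hi - b..fst hi} \<times> {snd lo..snd lo + a}"
  proof
    fix u assume u: "u \<in> U"
    then have "snd lo \<le> snd u" "snd u - snd lo \<le> a" "fst u \<le> fst hi" "fst hi - fst u \<le> b"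
      using lo hi assms(3)[of lo u] assms(3)[of u hi] by auto
    then show "u \<in> {fst hi - b..fst hi} \<times> {snd lo..snd lo + a}"
      by (simp add: mem_Times_iff)
  qed
  then show ?thesis using rect_sides_box by blast
qed

lemma polyF_axis_points:
  "(0, rpoly) \<in> polyF" "(0, - rpoly) \<in> polyF"
proof -
  have vertex: "(rpoly * cos (real k * pi / 250), rpoly * sin (real k * pi / 250)) \<in> polyF"
    if "k < 500" for k
    unfolding polyF_def by (rule hull_inc) (use that in blast)
  show "(0, rpoly) \<in> polyF" using vertex[of 125] by simp
  have angle: "real 375 * pi / 250 = 3 / 2 * pi" by simp
  have "(rpoly * cos (real 375 * pi / 250), rpoly * sin (real 375 * pi / 250)) \<in> polyF"
    by (rule vertex) simp
  then show "(0, - rpoly) \<in> polyF"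
    by (simp only: angle cos_3over2_pi sin_3over2_pi mult_zero_right mult_minus1_right)
qed

lemma rpoly_gt: "0.158 < rpoly"
  using pi_approx unfolding rpoly_def by (simp add: field_simps)

lemma compact_polyF: "compact polyF"
  unfolding polyF_def by (rule finite_imp_compact_convex_hull) simp

lemma compact_triT: "compact (triT x2 y2 \<theta>)"
  unfolding triT_def by (rule finite_imp_compact_convex_hull) simp

lemma rectR_eq: "rectR x1 y1 = {x1 - 0.4625 / 2..x1 + 0.4625 / 2} \<times> {y1 - 0.0375 / 2..y1 + 0.0375 / 2}"
  unfolding rectR_def abs_le_iff by auto

lemma compact_rectR: "compact (rectR x1 y1)"
  unfolding rectR_eq by (intro compact_Times compact_Icc)

lemma compact_convex_hull_configuration:
  "compact (convex hull (polyF \<union> rectR x1 y1 \<union> triT x2 y2 \<theta>))"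
  by (intro compact_convex_hull compact_Un compact_polyF compact_rectR compact_triT)

lemma fval_gt_if_tall:
  assumes "(p, a) \<in> convex hull (polyF \<union> rectR x1 y1 \<union> triT x2 y2 \<theta>)"
    and "(q, c) \<in> convex hull (polyF \<union> rectR x1 y1 \<union> triT x2 y2 \<theta>)"
    and "0.386 < c - a"
  shows "0.0975 < fval x1 y1 x2 y2 \<theta>"
proof -
  define K where "K = convex hull (polyF \<union> rectR x1 y1 \<union> triT x2 y2 \<theta>)"
  define b0 b1 :: real where "b0 = y1 - 0.0375 / 2" and "b1 = y1 + 0.0375 / 2"
  have R: "(x, y) \<in> K" if "x \<in> {x1 - 0.4625 / 2..x1 + 0.4625 / 2}" "y \<in> {b0..b1}" for x y
    using that hull_subset unfolding K_def rectR_eq b0_def b1_def by fastforce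
  obtain p' where bottom: "(p', min a b0) \<in> K"
    using assms(1) R[of x1 b0] unfolding K_def min_def by (cases "a \<le> b0") (auto simp: b0_def b1_def)
  obtain q' where top: "(q', max c b1) \<in> K"
    using assms(2) R[of x1 b1] unfolding K_def max_def by (cases "c \<le> b1") (auto simp: b0_def b1_def)
  have band: "\<exists>u. (u, y) \<in> K \<and> (u + 0.4625, y) \<in> K" if "y \<in> {b0..b1}" for y
    using R[OF _ that] by (intro exI[of _ "x1 - 0.4625 / 2"]) simp
  have K: "compact K" "convex K"
    unfolding K_def by (simp_all add: compact_convex_hull_configuration)
  have "0.4625 * (max c b1 - min a b0) / 2 + 0.4625 * (b1 - b0) / 2 \<le> measure lebesgue K"
    by (rule measure_ge_trapezoid[OF K _ _ _ _ bottom top band]) (auto simp: b0_def b1_def)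
  moreover have "0.0975 < 0.4625 * (max c b1 - min a b0) / 2 + 0.4625 * (b1 - b0) / 2"
  proof -
    have "0.386 < max c b1 - min a b0"
      using max.cobounded1[of c b1] min.cobounded1[of a b0] assms(3) by linarith
    moreover have "b1 - b0 = 0.0375" by (simp add: b0_def b1_def)
    ultimately show ?thesis by (simp add: field_simps)
  qed
  ultimately show ?thesis unfolding fval_def K_def by linarith
qed

lemma fval_gt_if_wide:
  assumes "(a, p) \<in> convex hull (polyF \<union> rectR x1 y1 \<union> triT x2 y2 \<theta>)"
    and "(c, q) \<in> convex hull (polyF \<union> rectR x1 y1 \<union> triT x2 y2 \<theta>)"
    and "0.644 < c - a"
  shows "0.0975 < fval x1 y1 x2 y2 \<theta>"
proof -
  define K where "K = convex hull (polyF \<union> rectR x1 y1 \<union> triT x2 y2 \<theta>)"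
  have F: "polyF \<subseteq> K" unfolding K_def by (auto intro: hull_inc)
  obtain p' where left: "(min a 0, p') \<in> K"
    using assms(1) polyF_axis_points(1) F unfolding K_def min_def by (cases "a \<le> 0") auto
  obtain q' where right: "(max c 0, q') \<in> K"
    using assms(2) polyF_axis_points(1) F unfolding K_def max_def by (cases "c \<le> 0") auto
  have band: "\<exists>u. (x, u) \<in> K \<and> (x, u + 2 * rpoly) \<in> K" if "x \<in> {0..0}" for x :: real
    using that polyF_axis_points F by (intro exI[of _ "- rpoly"]) auto
  have K: "compact K" "convex K"
    unfolding K_def by (simp_all add: compact_convex_hull_configuration)
  have "2 * rpoly * (max c 0 - min a 0) / 2 + 2 * rpoly * (0 - 0) / 2 \<le> measure lebesgue K"
    by (rule measure_ge_trapezoid_vertical[OF K _ _ _ _ left right band]) (use rpoly_gt in auto)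
  moreover have "0.0975 < rpoly * (max c 0 - min a 0)"
  proof -
    have "0.0975 < 0.158 * (0.644 :: real)" by simp
    also have "\<dots> < rpoly * (c - a)"
      using rpoly_gt assms(3) by (intro mult_strict_mono) auto
    also have "\<dots> \<le> rpoly * (max c 0 - min a 0)"
      using rpoly_gt by (intro mult_left_mono) auto
    finally show ?thesis .
  qed
  ultimately show ?thesis unfolding fval_def K_def by simp
qed

theorem corollary2:
  fixes x1 y1 x2 y2 \<theta> :: real
  shows "fval x1 y1 x2 y2 \<theta> > 0.0975 \<or>
         (\<exists>Q. rect_sides 0.386 0.644 Q \<and> polyF \<union> triT x2 y2 \<theta> \<union> rectR x1 y1 \<subseteq> Q)"
proof -
  let ?U = "polyF \<union> triT x2 y2 \<theta> \<union> rectR x1 y1"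
  have hull: "?U \<subseteq> convex hull (polyF \<union> rectR x1 y1 \<union> triT x2 y2 \<theta>)"
    by (auto intro: hull_inc)
  show ?thesis
  proof (cases "\<forall>u\<in>?U. \<forall>v\<in>?U. snd v - snd u \<le> 0.386 \<and> fst v - fst u \<le> 0.644")
    case True
    have "compact ?U" by (intro compact_Un compact_polyF compact_triT compact_rectR)
    moreover have "?U \<noteq> {}" using polyF_axis_points by blast
    ultimately show ?thesis using rect_sides_cover True by blast
  next
    case False
    then obtain u v where "u \<in> ?U" "v \<in> ?U"
      and far: "0.386 < snd v - snd u \<or> 0.644 < fst v - fst u"
      by (auto simp: not_le)
    then have "(fst u, snd u) \<in> convex hull (polyF \<union> rectR x1 y1 \<union> triT x2 y2 \<theta>)"
      and "(fst v, snd v) \<in> convex hull (polyF \<union> rectR x1 y1 \<union> triT x2 y2 \<theta>)"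
      using hull by auto
    with far show ?thesis
      using fval_gt_if_tall fval_gt_if_wide by blast
  qed
qed

end
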